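(* For any CABA framework $F_c$, every constrained instance of a constrained argument in $\mathit{CArg}$ is a constrained argument in $\mathit{CArg}$.
   Context: Conventions. $\mathsf X$: tuple of variables; $\mathsf t$: tuple of terms. A substitution $\vartheta=\{X_1/t_1,\dots,X_n/t_n\}$ maps distinct variables to terms; $e\vartheta$ replaces each $X_i$ by $t_i$; $\{\mathsf X/\mathsf t\}$ maps $\mathsf X$ componentwise to $\mathsf t$. Theory of constraints. $\mathcal{CT}$ is a first-order theory with equality whose atomic formulas form the set $\mathcal C$ of constraints; a finite set $\{c_1,\dots,c_n\}$ is consistent if $\mathcal{CT}\models\exists(c_1\wedge\dots\wedge c_n)$. CABA framework $F_c=\langle\mathcal L_c,\mathcal C,\mathcal R,\mathcal{CT},\mathcal A,\overline{\cdot}\rangle$: $\mathcal L_c$ a set of atoms; $\mathcal C\subseteq\mathcal L_c$ constraints; $\mathcal R$ rules $s_0\leftarrow s_1,\dots,s_m$ ($s_0\in\mathcal L_c\setminus\mathcal C$, $s_i\in\mathcal L_c$) in normalised form $p(\mathsf X_0)\leftarrow C,p_1(\mathsf X_1),\dots,p_m(\mathsf X_m)$; $\mathcal A\subseteq\mathcal L_c\setminus\mathcal C$ nonempty assumptions, not heads of rules; $\overline\cdot:\mathcal A\to\mathcal L_c\setminus\mathcal C$ total with $\overline{p(\mathsf t)}=cp(\mathsf t)$ for a fixed predicate $cp$ per assumption predicate $p$; $\mathcal L_c,\mathcal C,\mathcal A$ predicate closed. Constrained arguments. A tight constrained argument $C\cup A\vdash_R s$ (consistent $C\subseteq\mathcal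 C$, $A\subseteq\mathcal A$, $R\subseteq\mathcal R$, $s\in\mathcal L_c\setminus\mathcal C$) is a finite tree with root $s$, each non-leaf node $p(\mathsf t)$ having as children exactly $s_1\vartheta,\dots,s_m\vartheta$ for exactly one renamed-apart copy $p(\mathsf X)\leftarrow s_1,\dots,s_m$ of a rule of $R$, $\vartheta=\{\mathsf X/\mathsf t\}$ (or true for a fact), each leaf a constraint of $C$, an assumption of $A$ or true; $C,A,R$ exactly those occurring/used. $C'\cup A'\vdash_R s'$ is a constrained argument if there exist a tight constrained argument $C\cup A\vdash_R s$, a substitution $\vartheta$ and $D\subseteq\mathcal C$ with $C'=C\vartheta\cup D$, $A'=A\vartheta$, $s'=s\vartheta$ and $C'$ consistent. $\mathit{CArg}$ is the set of all constrained arguments of $F_c$. $\alpha'=C'\cup A'\vdash_R s'$ is a constrained instance (via $\vartheta$ and $D$) of a constrained argument $\alpha=C\cup A\vdash_R s$ if $\vartheta$ is a substitution, $D\subseteq\mathcal C$, $C'=C\vartheta\cup D$, $A'=A\vartheta$, $s'=s\vartheta$ and $C'$ is consistent. *)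

theory Defs
  imports Main
begin

datatype ('f,'v) trm = Var 'v | Fn 'f "('f,'v) trm list"

datatype ('p,'f,'v) atom = Atm 'p "('f,'v) trm list"

primrec tsubst :: "('v \<Rightarrow> ('f,'v) trm) \<Rightarrow> ('f,'v) trm \<Rightarrow> ('f,'v) trm" where
  "tsubst \<sigma> (Var x) = \<sigma> x"
| "tsubst \<sigma> (Fn f ts) = Fn f (map (tsubst \<sigma>) ts)"

primrec tvars :: "('f,'v) trm \<Rightarrow> 'v set" where
  "tvars (Var x) = {x}"
| "tvars (Fn f ts) = \<Union> (set (map tvars ts))"

primrec asubst :: "('v \<Rightarrow> ('f,'v) trm) \<Rightarrow> ('p,'f,'v) atom \<Rightarrow> ('p,'f,'v) atom" where
  "asubst \<sigma> (Atm p ts) = Atm p (map (tsubst \<sigma>) ts)"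

primrec avars :: "('p,'f,'v) atom \<Rightarrow> 'v set" where
  "avars (Atm p ts) = \<Union> (set (map tvars ts))"

primrec apred :: "('p,'f,'v) atom \<Rightarrow> 'p" where
  "apred (Atm p ts) = p"

definition is_subst :: "('v \<Rightarrow> ('f,'v) trm) \<Rightarrow> bool" where
  "is_subst \<sigma> \<longleftrightarrow> finite {x. \<sigma> x \<noteq> Var x}"

definition inst :: "'v list \<Rightarrow> ('f,'v) trm list \<Rightarrow> 'v \<Rightarrow> ('f,'v) trm" where
  "inst xs ts = (\<lambda>x. case map_of (zip xs ts) x of Some t \<Rightarrow> t | None \<Rightarrow> Var x)"

type_synonym ('p,'f,'v) rule = "('p,'f,'v) atom \<times> ('p,'f,'v) atom list"

definition rename :: "('v \<Rightarrow> 'v) \<Rightarrow> ('p,'f,'v) rule \<Rightarrow> ('p,'f,'v) rule" where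
  "rename \<rho> r = (asubst (Var \<circ> \<rho>) (fst r), map (asubst (Var \<circ> \<rho>)) (snd r))"

definition rvars :: "('p,'f,'v) rule \<Rightarrow> 'v set" where
  "rvars r = avars (fst r) \<union> \<Union> (set (map avars (snd r)))"

type_synonym ('f,'p,'d) struct = "('f \<Rightarrow> 'd list \<Rightarrow> 'd) \<times> ('p \<Rightarrow> 'd list \<Rightarrow> bool)"

primrec eval :: "('f \<Rightarrow> 'd list \<Rightarrow> 'd) \<Rightarrow> ('v \<Rightarrow> 'd) \<Rightarrow> ('f,'v) trm \<Rightarrow> 'd" where
  "eval F v (Var x) = v x"
| "eval F v (Fn f ts) = F f (map (eval F v) ts)"

primrec sat :: "('f,'p,'d) struct \<Rightarrow> ('v \<Rightarrow> 'd) \<Rightarrow> ('p,'f,'v) atom \<Rightarrow> bool" where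
  "sat M v (Atm p ts) = snd M p (map (eval (fst M) v) ts)"

text \<open>A finite set S of constraints is consistent iff CT entails the existential
  closure of its conjunction, i.e. every model of CT satisfies it under some valuation.\<close>
definition consistent :: "('f,'p,'d) struct set \<Rightarrow> ('p,'f,'v) atom set \<Rightarrow> bool" where
  "consistent Ms S \<longleftrightarrow> finite S \<and> (\<forall>M\<in>Ms. \<exists>v. \<forall>c\<in>S. sat M v c)"

definition predicate_closed :: "('p,'f,'v) atom set \<Rightarrow> bool" where
  "predicate_closed S \<longleftrightarrow> (\<forall>p ts ts'. Atm p ts \<in> S \<longrightarrow> Atm p ts' \<in> S)"

record ('p,'f,'v,'d) caba_fw =
  Lang :: "('p,'f,'v) atom set"
  Cons :: "('p,'f,'v) atom set"
  Rules :: "('p,'f,'v) rule set"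
  CTmodels :: "('f,'p,'d) struct set"
  EqPred :: 'p
  Asms :: "('p,'f,'v) atom set"
  Ctr :: "('p,'f,'v) atom \<Rightarrow> ('p,'f,'v) atom"

definition normalised :: "('p,'f,'v) atom set \<Rightarrow> ('p,'f,'v) rule \<Rightarrow> bool" where
  "normalised C r \<longleftrightarrow>
     (\<exists>p xs. fst r = Atm p (map Var xs) \<and> distinct xs) \<and>
     (\<forall>b\<in>set (snd r). b \<notin> C \<longrightarrow> (\<exists>q ys. b = Atm q (map Var ys)))"

definition caba_framework :: "('p,'f,'v,'d) caba_fw \<Rightarrow> bool" where
  "caba_framework F \<longleftrightarrow>
     Cons F \<subseteq> Lang F \<and>
     predicate_closed (Lang F) \<and> predicate_closed (Cons F) \<and> predicate_closed (Asms F) \<and>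
     (\<forall>s t. Atm (EqPred F) [s, t] \<in> Cons F) \<and>
     (\<forall>M\<in>CTmodels F. \<forall>a b. snd M (EqPred F) [a, b] = (a = b)) \<and>
     (\<forall>r\<in>Rules F. fst r \<in> Lang F - Cons F \<and> set (snd r) \<subseteq> Lang F \<and>
                   fst r \<notin> Asms F \<and> normalised (Cons F) r) \<and>
     Asms F \<noteq> {} \<and> Asms F \<subseteq> Lang F - Cons F \<and>
     (\<forall>a\<in>Asms F. Ctr F a \<in> Lang F - Cons F) \<and>
     (\<exists>cp. \<forall>p ts. Atm p ts \<in> Asms F \<longrightarrow> Ctr F (Atm p ts) = Atm (cp p) ts)"

text \<open>Node a r \<rho> cs: a non-leaf node labelled a, expanded with the copy (rename \<rho> r) of
  rule r; a node with no children corresponds to a fact (single child true).\<close>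
datatype ('p,'f,'v) ptree =
    Leaf "('p,'f,'v) atom"
  | Node "('p,'f,'v) atom" "('p,'f,'v) rule" "'v \<Rightarrow> 'v" "('p,'f,'v) ptree list"

fun label :: "('p,'f,'v) ptree \<Rightarrow> ('p,'f,'v) atom" where
  "label (Leaf a) = a"
| "label (Node a r \<rho> cs) = a"

fun leaves :: "('p,'f,'v) ptree \<Rightarrow> ('p,'f,'v) atom list" where
  "leaves (Leaf a) = [a]"
| "leaves (Node a r \<rho> cs) = concat (map leaves cs)"

fun steps :: "('p,'f,'v) ptree \<Rightarrow> (('p,'f,'v) rule \<times> ('v \<Rightarrow> 'v)) list" where
  "steps (Leaf a) = []"
| "steps (Node a r \<rho> cs) = (r, \<rho>) # concat (map steps cs)"

fun wf_tree :: "('p,'f,'v,'d) caba_fw \<Rightarrow> ('p,'f,'v) ptree \<Rightarrow> bool" where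
  "wf_tree F (Leaf a) = (a \<in> Cons F \<union> Asms F)"
| "wf_tree F (Node a r \<rho> cs) =
     (r \<in> Rules F \<and> inj \<rho> \<and>
      (\<exists>p xs ts. fst (rename \<rho> r) = Atm p (map Var xs) \<and> a = Atm p ts \<and>
                 length ts = length xs \<and>
                 map label cs = map (asubst (inst xs ts)) (snd (rename \<rho> r))) \<and>
      (\<forall>c\<in>set cs. wf_tree F c))"

definition renamed_apart :: "('p,'f,'v) ptree \<Rightarrow> bool" where
  "renamed_apart t \<longleftrightarrow>
     (let cps = map (\<lambda>(r, \<rho>). rename \<rho> r) (steps t) in
       (\<forall>i<length cps. \<forall>j<length cps. i \<noteq> j \<longrightarrow> rvars (cps ! i) \<inter> rvars (cps ! j) = {}) \<and>
       (\<forall>i<length cps. rvars (cps ! i) \<inter> avars (label t) = {}))"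

text \<open>A constrained argument C \<union> A |-_R s is represented by the tuple (C, A, R, s).\<close>
type_synonym ('p,'f,'v) carg =
  "('p,'f,'v) atom set \<times> ('p,'f,'v) atom set \<times> ('p,'f,'v) rule set \<times> ('p,'f,'v) atom"

definition tight_arg :: "('p,'f,'v,'d) caba_fw \<Rightarrow> ('p,'f,'v) carg \<Rightarrow> bool" where
  "tight_arg F arg \<longleftrightarrow>
     (case arg of (C, A, R, s) \<Rightarrow>
       C \<subseteq> Cons F \<and> consistent (CTmodels F) C \<and> A \<subseteq> Asms F \<and> R \<subseteq> Rules F \<and>
       s \<in> Lang F - Cons F \<and>
       (\<exists>t. wf_tree F t \<and> renamed_apart t \<and> label t = s \<and>
            C = {a \<in> set (leaves t). a \<in> Cons F} \<and>
            A = {a \<in> set (leaves t). a \<in> Asms F} \<and>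
            R = fst ` set (steps t)))"

definition CArg :: "('p,'f,'v,'d) caba_fw \<Rightarrow> ('p,'f,'v) carg set" where
  "CArg F = {(C', A', R, s'). \<exists>C A s \<theta> D.
      tight_arg F (C, A, R, s) \<and> is_subst \<theta> \<and> D \<subseteq> Cons F \<and>
      C' = asubst \<theta> ` C \<union> D \<and> A' = asubst \<theta> ` A \<and> s' = asubst \<theta> s \<and>
      consistent (CTmodels F) C'}"

definition constrained_instance ::
  "('p,'f,'v,'d) caba_fw \<Rightarrow> ('p,'f,'v) carg \<Rightarrow> ('p,'f,'v) carg \<Rightarrow> bool" where
  "constrained_instance F \<alpha>' \<alpha> \<longleftrightarrow>
     (case \<alpha> of (C, A, R, s) \<Rightarrow> case \<alpha>' of (C', A', R', s') \<Rightarrow>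
       R' = R \<and> (\<exists>\<theta> D. is_subst \<theta> \<and> D \<subseteq> Cons F \<and>
         C' = asubst \<theta> ` C \<union> D \<and> A' = asubst \<theta> ` A \<and> s' = asubst \<theta> s \<and>
         consistent (CTmodels F) C'))"

end

theory Submission
  imports Defs
begin

text \<open>A constrained instance (via \<open>\<theta>'\<close>, \<open>D'\<close>) of an instance (via \<open>\<theta>\<close>, \<open>D\<close>) of a tight
  argument is itself an instance of that tight argument, via the composed substitution
  \<open>\<theta>' \<circ> \<theta>\<close> and the extra constraints \<open>\<theta>'(D) \<union> D'\<close>; these are constraints again because the
  set of constraints is predicate closed.\<close>

lemma tsubst_tsubst: "tsubst \<sigma> (tsubst \<tau> t) = tsubst (tsubst \<sigma> \<circ> \<tau>) t"
  by (induction t) auto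

lemma asubst_asubst: "asubst \<sigma> (asubst \<tau> a) = asubst (tsubst \<sigma> \<circ> \<tau>) a"
  by (cases a) (simp add: tsubst_tsubst)

lemma image_asubst_asubst: "asubst \<sigma> ` asubst \<tau> ` A = asubst (tsubst \<sigma> \<circ> \<tau>) ` A"
  by (simp add: image_image asubst_asubst)

lemma is_subst_comp:
  assumes "is_subst \<sigma>" and "is_subst \<tau>"
  shows "is_subst (tsubst \<sigma> \<circ> \<tau>)"
proof -
  have "{x. (tsubst \<sigma> \<circ> \<tau>) x \<noteq> Var x} \<subseteq> {x. \<tau> x \<noteq> Var x} \<union> {x. \<sigma> x \<noteq> Var x}"
    by auto
  with assms show ?thesis
    unfolding is_subst_def by (meson finite_UnI finite_subset)
qed

lemma asubst_in_predicate_closed: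
  assumes "predicate_closed S" and "a \<in> S"
  shows "asubst \<sigma> a \<in> S"
  using assms by (cases a) (auto simp: predicate_closed_def)

lemma image_asubst_subset_predicate_closed:
  assumes "predicate_closed S" and "D \<subseteq> S"
  shows "asubst \<sigma> ` D \<subseteq> S"
  using assms asubst_in_predicate_closed by blast

lemma image_asubst_instance:
  "asubst \<sigma> ` (asubst \<tau> ` C \<union> D) \<union> D' = asubst (tsubst \<sigma> \<circ> \<tau>) ` C \<union> (asubst \<sigma> ` D \<union> D')"
  by (auto simp: image_asubst_asubst image_Un)

theorem propositionB1:
  fixes F :: "('p,'f,'v,'d) caba_fw"
    and \<alpha> \<alpha>' :: "('p,'f,'v) carg"
  assumes "caba_framework F"
    and "\<alpha> \<in> CArg F"
    and "constrained_instance F \<alpha>' \<alpha>"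
  shows "\<alpha>' \<in> CArg F"
proof -
  obtain C1 A1 R s1 where \<alpha>: "\<alpha> = (C1, A1, R, s1)" by (cases \<alpha>) auto
  obtain C2 A2 R2 s2 where \<alpha>': "\<alpha>' = (C2, A2, R2, s2)" by (cases \<alpha>') auto
  from assms(2) obtain C A s \<theta> D where
    tight: "tight_arg F (C, A, R, s)" and \<theta>: "is_subst \<theta>" and D: "D \<subseteq> Cons F"
    and C1: "C1 = asubst \<theta> ` C \<union> D" and A1: "A1 = asubst \<theta> ` A" and s1: "s1 = asubst \<theta> s"
    unfolding \<alpha> CArg_def by blast
  from assms(3) obtain \<theta>' D' where
    R2: "R2 = R" and \<theta>': "is_subst \<theta>'" and D': "D' \<subseteq> Cons F"
    and C2: "C2 = asubst \<theta>' ` C1 \<union> D'" and A2: "A2 = asubst \<theta>' ` A1"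
    and s2: "s2 = asubst \<theta>' s1" and consistent: "consistent (CTmodels F) C2"
    unfolding \<alpha> \<alpha>' constrained_instance_def by auto
  have "predicate_closed (Cons F)"
    using assms(1) unfolding caba_framework_def by blast
  with D D' have "asubst \<theta>' ` D \<union> D' \<subseteq> Cons F"
    using image_asubst_subset_predicate_closed by blast
  moreover have "C2 = asubst (tsubst \<theta>' \<circ> \<theta>) ` C \<union> (asubst \<theta>' ` D \<union> D')"
    unfolding C2 C1 by (rule image_asubst_instance)
  moreover have "A2 = asubst (tsubst \<theta>' \<circ> \<theta>) ` A"
    unfolding A2 A1 by (rule image_asubst_asubst)
  moreover have "s2 = asubst (tsubst \<theta>' \<circ> \<theta>) s"
    unfolding s2 s1 by (rule asubst_asubst)
  moreover have "is_subst (tsubst \<theta>' \<circ> \<theta>)"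
    using \<theta>' \<theta> by (rule is_subst_comp)
  ultimately show ?thesis
    using tight consistent unfolding \<alpha>' R2 CArg_def by blast
qed

end
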